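(* Consider a unit-demand buyer with value distribution $\mathcal{D}$ over $m$ items, a deterministic item pricing $p\in\mathbb{R}_+^m$, and a random set $S\subseteq[m]$ of available items (independent of the buyer's value). Let $x^*=\mathbb{E}_S[\mathbf{x}_{p,S}]$. Then for every $y\in\Delta_m$ with $y\preceq x^*$ there exists a random item pricing $q$ (independent of $S$ and of the buyer's value) such that $$\mathbb{E}_{q,S}[\mathbf{x}_{q,S}]=y\quad\text{and}\quad \mathbb{E}_{q,S}[\textsc{Rev}_{q,S}]=y\cdot p.$$
   Context: Unit-demand buyer: valuation $v$ with $v_j\ge0$ per item, $v(S)=\max_{j\in S}v_j$; $\mathcal{D}$ arbitrary. $\Delta_m=\{\lambda\in[0,1]^m:\sum_j\lambda_j\le1\}$. An item pricing is a vector $p\in(\mathbb{R}_+\cup\{\infty\})^m$; when the set of available items is $S$, the buyer purchases an item $j\in S$ maximizing $v_j-p_j$ if this maximum is nonnegative (otherwise nothing) and pays $p_j$. $\mathbf{x}_{p,S}\in\Delta_m$ is the vector whose $j$-th entry is the probability over $v\sim\mathcal{D}$ that item $j$ is purchased under pricing $p$ with available set $S$, and $\textsc{Rev}_{p,S}$ the corresponding expected payment. A random item pricing is a distribution over item pricings; expectations are also taken over its randomness. $y\preceq x$ means $y_j\le x_j$ for all $j$. *)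

theory Defs
  imports "HOL-Probability.Probability"
begin

text \<open>Items are the elements of a finite linearly ordered type 'm (so m = CARD('m)). Ties among utility-maximizing items are broken
in favour of the smallest item (w.r.t. the order of 'm); the buyer buys when the
maximal utility is nonnegative.\<close>

definition utility :: "('m::{finite,linorder} \<Rightarrow> ennreal) \<Rightarrow> (real, 'm) vec \<Rightarrow> 'm \<Rightarrow> real" where
  "utility p v j = v $ j - enn2real (p j)"

definition affordable :: "('m::{finite,linorder} \<Rightarrow> ennreal) \<Rightarrow> 'm set \<Rightarrow> 'm set" where
  "affordable p S = {j \<in> S. p j \<noteq> \<top>}"

definition choice :: "('m::{finite,linorder} \<Rightarrow> ennreal) \<Rightarrow> 'm set \<Rightarrow> (real, 'm) vec \<Rightarrow> 'm option" where
  "choice p S v =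
     (if affordable p S = {} then None
      else (let M = Max (utility p v ` affordable p S) in
            if M \<ge> 0 then Some (Min {j \<in> affordable p S. utility p v j = M}) else None))"

definition xvec :: "((real, 'm) vec) measure \<Rightarrow> ('m::{finite,linorder} \<Rightarrow> ennreal) \<Rightarrow> 'm set \<Rightarrow> 'm \<Rightarrow> real" where
  "xvec D p S j = measure D {v \<in> space D. choice p S v = Some j}"

definition payment :: "('m::{finite,linorder} \<Rightarrow> ennreal) \<Rightarrow> 'm set \<Rightarrow> (real, 'm) vec \<Rightarrow> real" where
  "payment p S v = (case choice p S v of None \<Rightarrow> 0 | Some j \<Rightarrow> enn2real (p j))"

definition Rev :: "((real, 'm) vec) measure \<Rightarrow> ('m::{finite,linorder} \<Rightarrow> ennreal) \<Rightarrow> 'm set \<Rightarrow> real" where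
  "Rev D p S = (\<integral>v. payment p S v \<partial>D)"

end

theory Submission
  imports Defs
begin

text \<open>Pricing out a set T of items (price \<infinity> on T, p elsewhere) gives a family of purchase
vectors f T, with f T j = 0 for j \<in> T, and f T j can only grow when a further item other than j
is priced out. Any y with 0 \<le> y \<le> f {} is then a mixture of the vectors f T: scale f T down by
the largest t with t f T \<le> y; some item k \<notin> T becomes tight, and the rest (y - t f T) / (1 - t)
is dominated by f (insert k T), so we recurse on the larger set T. Mixing the pricings
accordingly gives purchase vector y, and since each item is sold at price p j whenever it is
sold, the revenue is y \<bullet> p.\<close>

lemma expectation_bernoulli_mix:
  fixes P Q :: "'a::finite pmf" and g :: "'a \<Rightarrow> real"
  assumes "0 \<le> t" "t \<le> 1"
  shows "measure_pmf.expectation (bernoulli_pmf t \<bind> (\<lambda>b. if b then P else Q)) g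
           = t * measure_pmf.expectation P g + (1 - t) * measure_pmf.expectation Q g"
  using assms by (subst pmf_expectation_bind[of UNIV]) (auto simp: UNIV_bool)

lemma dominated_vector_split:
  fixes f :: "'a::finite set \<Rightarrow> 'a \<Rightarrow> real"
  assumes vanish: "\<And>T j. j \<in> T \<Longrightarrow> f T j = 0"
    and mono: "\<And>T k j. j \<notin> insert k T \<Longrightarrow> f T j \<le> f (insert k T) j"
    and y: "\<And>j. 0 \<le> y j \<and> y j \<le> f T j" and ne: "y \<noteq> f T"
  obtains k t z where "k \<notin> T" "0 \<le> t" "t < 1" "\<And>j. 0 \<le> z j \<and> z j \<le> f (insert k T) j"
    "\<And>j. y j = t * f T j + (1 - t) * z j"
proof -
  \<comment> \<open>Items with f T j = 0 put no constraint on t, hence the ratio 1 for them.\<close>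
  define r where "r j = (if f T j > 0 then y j / f T j else 1)" for j
  have yT: "y j = f T j" if "j \<in> T" for j
    using y[of j] vanish[OF that] by simp
  then obtain j0 where "j0 \<notin> T" "y j0 \<noteq> f T j0"
    using ne by blast
  then have "r j0 < 1"
    using y[of j0] by (auto simp: r_def divide_less_eq)
  define t where "t = Min (r ` (- T))"
  obtain k where k: "k \<notin> T" "r k = t"
    using Min_in[of "r ` (- T)"] \<open>j0 \<notin> T\<close> t_def by fastforce
  have t_le: "t \<le> r j" if "j \<notin> T" for j
    using that t_def by simp
  have "t < 1"
    using t_le[OF \<open>j0 \<notin> T\<close>] \<open>r j0 < 1\<close> by simp
  have "0 \<le> t"
    using k y[of k] by (auto simp: r_def)
  have tk: "y k = t * f T k"
    using k \<open>t < 1\<close> by (auto simp: r_def split: if_splits)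
  define z where "z j = (y j - t * f T j) / (1 - t)" for j
  have "0 \<le> z j \<and> z j \<le> f (insert k T) j" for j
  proof (cases "j \<in> insert k T")
    case True
    then show ?thesis
      using vanish[of j T] vanish[OF True] yT tk by (auto simp: z_def)
  next
    case False
    have "t * f T j \<le> y j"
    proof (cases "f T j > 0")
      case True
      then show ?thesis
        using t_le[of j] False by (simp add: r_def le_divide_eq)
    next
      case False
      then have "f T j = 0"
        using y[of j] by linarith
      then show ?thesis
        using y[of j] by simp
    qed
    moreover have "y j - t * f T j \<le> (1 - t) * f T j"
      using y[of j] by (simp add: algebra_simps)
    ultimately have "0 \<le> z j \<and> z j \<le> f T j"
      using \<open>t < 1\<close> by (simp add: z_def divide_le_eq mult.commute)
    then show ?thesis
      using mono[OF False] by linarith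
  qed
  moreover have "y j = t * f T j + (1 - t) * z j" for j
    using \<open>t < 1\<close> by (simp add: z_def)
  ultimately show ?thesis
    using that k \<open>0 \<le> t\<close> \<open>t < 1\<close> by blast
qed

lemma dominated_vector_expectation_of_family:
  fixes f :: "'a::finite set \<Rightarrow> 'a \<Rightarrow> real"
  assumes vanish: "\<And>T j. j \<in> T \<Longrightarrow> f T j = 0"
    and mono: "\<And>T k j. j \<notin> insert k T \<Longrightarrow> f T j \<le> f (insert k T) j"
    and "\<And>j. 0 \<le> y j \<and> y j \<le> f T j"
  shows "\<exists>W :: 'a set pmf. \<forall>j. measure_pmf.expectation W (\<lambda>U. f U j) = y j"
  using assms(3)
proof (induction "card (- T)" arbitrary: T y rule: less_induct)
  case less
  show ?case
  proof (cases "y = f T")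
    case True
    then show ?thesis
      by (intro exI[of _ "return_pmf T"]) simp
  next
    case False
    then obtain k t z where k: "k \<notin> T" and t: "0 \<le> t" "t < 1"
        and z: "\<And>j. 0 \<le> z j \<and> z j \<le> f (insert k T) j"
        and y: "\<And>j. y j = t * f T j + (1 - t) * z j"
      using dominated_vector_split[where f = f and T = T and y = y] vanish mono less.prems by blast
    have "card (- insert k T) < card (- T)"
      using k by (intro psubset_card_mono) auto
    then obtain W where W: "\<And>j. measure_pmf.expectation W (\<lambda>U. f U j) = z j"
      using less.hyps z by blast
    show ?thesis
      by (intro exI[of _ "bernoulli_pmf t \<bind> (\<lambda>b. if b then return_pmf T else W)"])
         (simp add: expectation_bernoulli_mix t less_imp_le W y)
  qed
qed

lemma choice_Some_iff:
  "choice q S v = Some j \<longleftrightarrow>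
     j \<in> affordable q S \<and> 0 \<le> utility q v j \<and>
     (\<forall>i\<in>affordable q S. utility q v i \<le> utility q v j) \<and>
     (\<forall>i\<in>affordable q S. i < j \<longrightarrow> utility q v i < utility q v j)"
    (is "_ \<longleftrightarrow> ?best j")
proof
  let ?A = "affordable q S" and ?u = "utility q v"
  assume choice: "choice q S v = Some j"
  then have "?A \<noteq> {}"
    by (auto simp: choice_def split: if_splits)
  define M where "M = Max (?u ` ?A)"
  have "0 \<le> M" and j: "j = Min {i \<in> ?A. ?u i = M}"
    using choice \<open>?A \<noteq> {}\<close> by (auto simp: choice_def M_def Let_def split: if_splits)
  have "M \<in> ?u ` ?A"
    using \<open>?A \<noteq> {}\<close> M_def by simp
  then have "j \<in> ?A" "?u j = M"
    using Min_in[of "{i \<in> ?A. ?u i = M}"] j by auto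
  moreover have le: "?u i \<le> M" if "i \<in> ?A" for i
    using that M_def by simp
  moreover have "?u i < M" if "i \<in> ?A" "i < j" for i
    using le[OF that(1)] that j Min_le[of "{i \<in> ?A. ?u i = M}" i] by fastforce
  ultimately show "?best j"
    using \<open>0 \<le> M\<close> by auto
next
  assume best: "?best j"
  then have "Max (utility q v ` affordable q S) = utility q v j"
    by (intro Max_eqI) auto
  moreover have "Min {i \<in> affordable q S. utility q v i = utility q v j} = j"
    using best by (intro Min_eqI) (auto simp: not_less[symmetric])
  ultimately show "choice q S v = Some j"
    using best by (auto simp: choice_def Let_def)
qed

lemma sets_choice_eq_Some:
  fixes D :: "((real, 'm::{finite,linorder}) vec) measure"
  assumes "sets D = sets borel"
  shows "{v \<in> space D. choice q S v = Some j} \<in> sets D"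
proof -
  have "{v \<in> space D. choice q S v = Some j} = {v \<in> space borel. j \<in> affordable q S \<and>
      0 \<le> utility q v j \<and> (\<forall>i\<in>affordable q S. utility q v i \<le> utility q v j) \<and>
      (\<forall>i\<in>affordable q S. i < j \<longrightarrow> utility q v i < utility q v j)}"
    using sets_eq_imp_space_eq[OF assms] by (simp add: choice_Some_iff)
  also have "\<dots> \<in> sets borel"
    unfolding utility_def by measurable
  finally show ?thesis
    using assms by simp
qed

lemma Rev_eq_sum_xvec:
  fixes D :: "((real, 'm::{finite,linorder}) vec) measure"
  assumes "prob_space D" "sets D = sets borel"
  shows "Rev D q S = (\<Sum>j\<in>UNIV. xvec D q S j * enn2real (q j))"
proof -
  interpret prob_space D by fact
  let ?E = "\<lambda>j. {v \<in> space D. choice q S v = Some j}"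
  have "payment q S v = (\<Sum>j\<in>UNIV. indicator (?E j) v * enn2real (q j))" for v
    using sets_eq_imp_space_eq[OF assms(2)]
    by (cases "choice q S v") (auto simp: payment_def indicator_def if_distrib cong: if_cong)
  then have "Rev D q S = (\<integral>v. (\<Sum>j\<in>UNIV. indicator (?E j) v * enn2real (q j)) \<partial>D)"
    by (simp add: Rev_def)
  also have "\<dots> = (\<Sum>j\<in>UNIV. \<integral>v. indicator (?E j) v * enn2real (q j) \<partial>D)"
    by (intro Bochner_Integration.integral_sum integrable_mult_left integrable_real_indicator)
       (auto intro: sets_choice_eq_Some[OF assms(2)] simp: less_top[symmetric])
  also have "\<dots> = (\<Sum>j\<in>UNIV. xvec D q S j * enn2real (q j))"
    by (simp add: xvec_def Int_absorb2)
  finally show ?thesis .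
qed

definition price_out :: "('m \<Rightarrow> real) \<Rightarrow> 'm set \<Rightarrow> 'm \<Rightarrow> ennreal" where
  "price_out p T i = (if i \<in> T then \<top> else ennreal (p i))"

lemma price_out_empty: "price_out p {} = (\<lambda>i. ennreal (p i))"
  by (simp add: fun_eq_iff price_out_def)

lemma xvec_price_out_eq_0:
  fixes D :: "((real, 'm::{finite,linorder}) vec) measure"
  assumes "j \<in> T"
  shows "xvec D (price_out p T) S j = 0"
proof -
  have "{v \<in> space D. choice (price_out p T) S v = Some j} = {}"
    using assms by (auto simp: choice_Some_iff affordable_def price_out_def)
  then show ?thesis
    by (simp only: xvec_def measure_empty)
qed

lemma choice_price_out_insert:
  assumes "j \<notin> insert k T" "choice (price_out p T) S v = Some j"
  shows "choice (price_out p (insert k T)) S v = Some j"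
proof -
  have "affordable (price_out p (insert k T)) S = affordable (price_out p T) S - {k}"
    by (auto simp: affordable_def price_out_def)
  moreover have "utility (price_out p (insert k T)) v i = utility (price_out p T) v i"
    if "i \<notin> insert k T" for i
    using that by (simp add: price_out_def utility_def)
  ultimately show ?thesis
    using assms by (auto simp: choice_Some_iff affordable_def price_out_def)
qed

lemma xvec_price_out_mono:
  fixes D :: "((real, 'm::{finite,linorder}) vec) measure"
  assumes "prob_space D" "sets D = sets borel" "j \<notin> insert k T"
  shows "xvec D (price_out p T) S j \<le> xvec D (price_out p (insert k T)) S j"
proof -
  interpret prob_space D by fact
  show ?thesis
    unfolding xvec_def
    by (intro finite_measure_mono sets_choice_eq_Some[OF assms(2)])
       (auto intro: choice_price_out_insert[OF assms(3)])
qed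

lemma Rev_price_out:
  fixes D :: "((real, 'm::{finite,linorder}) vec) measure"
  assumes "prob_space D" "sets D = sets borel" "\<forall>j. p j \<ge> 0"
  shows "Rev D (price_out p T) S = (\<Sum>j\<in>UNIV. xvec D (price_out p T) S j * p j)"
  unfolding Rev_eq_sum_xvec[OF assms(1,2)]
  by (intro sum.cong refl) (auto simp: xvec_price_out_eq_0 price_out_def assms(3))

theorem lemma1:
  fixes D :: "((real, 'm::{finite,linorder}) vec) measure"
    and p :: "'m \<Rightarrow> real"
    and Sd :: "'m set pmf"
    and y :: "'m \<Rightarrow> real"
  assumes "prob_space D"
    and "sets D = sets borel"
    and "AE v in D. \<forall>j. v $ j \<ge> 0"
    and "\<forall>j. p j \<ge> 0"
    and "\<forall>j. 0 \<le> y j \<and> y j \<le> 1"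
    and "(\<Sum>j\<in>UNIV. y j) \<le> 1"
    and "\<forall>j. y j \<le> measure_pmf.expectation Sd (\<lambda>S. xvec D (\<lambda>i. ennreal (p i)) S j)"
  shows "\<exists>Q :: ('m \<Rightarrow> ennreal) pmf.
           (\<forall>j. measure_pmf.expectation Q
                  (\<lambda>q. measure_pmf.expectation Sd (\<lambda>S. xvec D q S j)) = y j)
         \<and> integrable (measure_pmf Q) (\<lambda>q. measure_pmf.expectation Sd (\<lambda>S. Rev D q S))
         \<and> measure_pmf.expectation Q (\<lambda>q. measure_pmf.expectation Sd (\<lambda>S. Rev D q S))
             = (\<Sum>j\<in>UNIV. y j * p j)"
proof -
  \<comment> \<open>Nonnegativity of the values is not needed, and \<Sum>j. y j \<le> 1 already follows from
    y \<preceq> x*, since the purchase events of different items are disjoint.\<close>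
  define f where "f T j = measure_pmf.expectation Sd (\<lambda>S. xvec D (price_out p T) S j)" for T j
  have "\<exists>W :: 'm set pmf. \<forall>j. measure_pmf.expectation W (\<lambda>U. f U j) = y j"
  proof (rule dominated_vector_expectation_of_family)
    show "f T j = 0" if "j \<in> T" for T j
      using that by (simp add: f_def xvec_price_out_eq_0)
    show "f T j \<le> f (insert k T) j" if "j \<notin> insert k T" for T k j
      unfolding f_def using assms(1,2) that
      by (intro integral_mono integrable_measure_pmf_finite xvec_price_out_mono) auto
    show "0 \<le> y j \<and> y j \<le> f {} j" for j
      using assms(5,7) by (simp add: f_def price_out_empty)
  qed
  then obtain W :: "'m set pmf" where W: "\<And>j. measure_pmf.expectation W (\<lambda>U. f U j) = y j"
    by blast
  have Rev: "measure_pmf.expectation Sd (\<lambda>S. Rev D (price_out p U) S) = (\<Sum>j\<in>UNIV. f U j * p j)"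
    for U
    by (simp add: Rev_price_out[OF assms(1,2,4)] f_def integrable_measure_pmf_finite)
  have "measure_pmf.expectation W (\<lambda>U. \<Sum>j\<in>UNIV. f U j * p j) = (\<Sum>j\<in>UNIV. y j * p j)"
    by (simp add: W integrable_measure_pmf_finite)
  then show ?thesis
    using W Rev
    by (intro exI[of _ "map_pmf (price_out p) W"]) (simp add: f_def integrable_measure_pmf_finite)
qed

end
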